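(* Let $T$ be a trace (well formed, with a matching release for each acquire) and let $<$ be a strict partial order on $\mathrm{evts}(T)$ satisfying the MHB-Criteria. Then $\mathrm{LH}_{<}(e)\subseteq \mathrm{LH}_T(e)$ for all $e\in T$.
   Context: Events and traces. An event is a triple $e=(\alpha,t,op)$ with a unique identifier $\alpha$, a thread id $t$ and an operation $op$, which is one of $\mathit{rd}(x)$, $\mathit{wr}(x)$ (read/write of a shared variable $x$) or $\mathit{req}(l)$, $\mathit{acq}(l)$, $\mathit{rel}(l)$ (request, acquire, release of a lock $l$). Write $\mathrm{thd}(e)=t$. A trace is a finite list of events with distinct identifiers; $e\in T$ means $e$ occurs in $T$, $\mathrm{evts}(T)$ is its set of events, and $e<_T f$ means $e$ occurs at an earlier position than $f$ in $T$. Well formedness. $T$ is well formed if: (WF-Acq) for all $a=(t,\mathit{acq}(l))$, $a'=(t',\mathit{acq}(l))$ in $T$ with $a<_T a'$ there is $r=(t,\mathit{rel}(l))\in T$ with $a<_T r<_T a'$; (WF-Rel) for every $r=(t,\mathit{rel}(l))\in T$ there is $a=(t,\mathit{acq}(l))\in T$ with $a<_T r$ and no $r'=(t',\mathit{rel}(l))\in T$ with $a<_T r'<_T r$; (WF-Req) for every $a=(t,\mathit{acq}(l))\in T$ there is $q=(t,\mathit{req}(l))\in T$ with $q<_T a$ and no event of thread $t$ strictly between $q$ and $a$, and for every $q=(t,\mathit{req}(l))\in T$, the event of thread $t$ immediately following $q$ in $T$ (if any) is of the form $(t,\mathit{acq}(l))$. Standing assumption: $T$ is well formed and every acquire has a matching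 release in $T$. Correct reorderings. For a read $e=(\cdot,\mathit{rd}(x))\in T$, $\mathrm{lw}_T(e)$ is the write $f=(\cdot,\mathit{wr}(x))$ with $f<_T e$ and no write on $x$ strictly between them in $T$. A trace $T'$ is a correctly reordered prefix of $T$ if (CRP-WF) $T'$ is well formed and $\mathrm{evts}(T')\subseteq\mathrm{evts}(T)$; (CRP-PO) for every thread $t$ of $T'$, the subsequence of thread-$t$ events of $T'$ is a prefix of that of $T$; (CRP-LW) for every read $e\in T'$ with $f=\mathrm{lw}_T(e)$ we have $f=\mathrm{lw}_{T'}(e)$. $\mathrm{crp}(T)$ is the set of correctly reordered prefixes of $T$. Trace-based lock sets. Write $e\prec_T f$ if for every $T'\in\mathrm{crp}(T)$ with $f\in T'$ we have $e\in T'$ and $e<_{T'}f$. For $a=(t,\mathit{acq}(l))$, $r=(t,\mathit{rel}(l))\in T$, $e\in\mathrm{CS}_T(a,r)$ iff (CS-Enclosed) $a\prec_T e$ and $e\prec_T r$, and (CS-Match) there is no release $r'=(t,\mathit{rel}(l))\in T$ and $T'\in\mathrm{crp}(T)$ with $a<_{T'}r'<_{T'}e$. $\mathrm{LH}_T(e)=\{(l,t)\mid \exists a,r\in T,\ a=(t,\mathit{acq}(l)),\ e\in\mathrm{CS}_T(a,r)\}$. Partial-order lock sets. For a strict partial order $<$ on $\mathrm{evts}(T)$ and $a=(t,\mathit{acq}(l))$, $r=(t,\mathit{rel}(l))\in T$: $e\in\mathrm{CS}_{<}(a,r)$ iff (PO-CS-Enclosed) $a<e$ and $e<r$, and (PO-CS-Match)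 there is no release $r'=(t,\mathit{rel}(l))\in T$ and $T'\in\mathrm{crp}(T)$ with $a<_{T'}r'<_{T'}e$. $\mathrm{LH}_{<}(e)=\{(l,t)\mid \exists a,r\in T,\ a=(t,\mathit{acq}(l)),\ e\in\mathrm{CS}_{<}(a,r)\}$. The order $<$ satisfies the MHB-Criteria if whenever $e<f$, for every $T'\in\mathrm{crp}(T)$ with $f\in T'$ we have $e\in T'$ and $e<_{T'}f$. *)

theory Defs
  imports Main "HOL-Library.Sublist"
begin

datatype ('x,'l) op = Rd 'x | Wr 'x | Req 'l | Acq 'l | Rel 'l

datatype ('i,'t,'x,'l) event = Ev (eid: 'i) (thd: 't) (eop: "('x,'l) op")

type_synonym ('i,'t,'x,'l) trace = "('i,'t,'x,'l) event list"

definition is_trace :: "('i,'t,'x,'l) trace \<Rightarrow> bool" where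
  "is_trace T \<longleftrightarrow> distinct (map eid T)"

definition evts :: "('i,'t,'x,'l) trace \<Rightarrow> ('i,'t,'x,'l) event set" where
  "evts T = set T"

definition before :: "('i,'t,'x,'l) trace \<Rightarrow> ('i,'t,'x,'l) event \<Rightarrow> ('i,'t,'x,'l) event \<Rightarrow> bool" where
  "before T e f \<longleftrightarrow> (\<exists>i j. i < j \<and> j < length T \<and> T ! i = e \<and> T ! j = f)"

definition wf_acq :: "('i,'t,'x,'l) trace \<Rightarrow> bool" where
  "wf_acq T \<longleftrightarrow> (\<forall>a \<in> set T. \<forall>a' \<in> set T. \<forall>l.
      eop a = Acq l \<and> eop a' = Acq l \<and> before T a a' \<longrightarrow>
      (\<exists>r \<in> set T. thd r = thd a \<and> eop r = Rel l \<and> before T a r \<and> before T r a'))"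

definition wf_rel :: "('i,'t,'x,'l) trace \<Rightarrow> bool" where
  "wf_rel T \<longleftrightarrow> (\<forall>r \<in> set T. \<forall>l. eop r = Rel l \<longrightarrow>
      (\<exists>a \<in> set T. thd a = thd r \<and> eop a = Acq l \<and> before T a r \<and>
         \<not> (\<exists>r' \<in> set T. eop r' = Rel l \<and> before T a r' \<and> before T r' r)))"

definition wf_req :: "('i,'t,'x,'l) trace \<Rightarrow> bool" where
  "wf_req T \<longleftrightarrow>
     (\<forall>a \<in> set T. \<forall>l. eop a = Acq l \<longrightarrow>
        (\<exists>q \<in> set T. thd q = thd a \<and> eop q = Req l \<and> before T q a \<and>
           \<not> (\<exists>g \<in> set T. thd g = thd a \<and> before T q g \<and> before T g a))) \<and>
     (\<forall>q \<in> set T. \<forall>l. eop q = Req l \<longrightarrow>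
        (\<forall>g \<in> set T. thd g = thd q \<and> before T q g \<and>
           \<not> (\<exists>h \<in> set T. thd h = thd q \<and> before T q h \<and> before T h g)
           \<longrightarrow> eop g = Acq l))"

definition well_formed :: "('i,'t,'x,'l) trace \<Rightarrow> bool" where
  "well_formed T \<longleftrightarrow> is_trace T \<and> wf_acq T \<and> wf_rel T \<and> wf_req T"

definition acq_matched :: "('i,'t,'x,'l) trace \<Rightarrow> bool" where
  "acq_matched T \<longleftrightarrow> (\<forall>a \<in> set T. \<forall>l. eop a = Acq l \<longrightarrow>
      (\<exists>r \<in> set T. thd r = thd a \<and> eop r = Rel l \<and> before T a r \<and>
         \<not> (\<exists>r' \<in> set T. eop r' = Rel l \<and> before T a r' \<and> before T r' r)))"

definition is_lw :: "('i,'t,'x,'l) trace \<Rightarrow> ('i,'t,'x,'l) event \<Rightarrow> ('i,'t,'x,'l) event \<Rightarrow> bool" where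
  "is_lw T e f \<longleftrightarrow> (\<exists>x. eop e = Rd x \<and> f \<in> set T \<and> eop f = Wr x \<and> before T f e \<and>
      \<not> (\<exists>g \<in> set T. eop g = Wr x \<and> before T f g \<and> before T g e))"

definition crp :: "('i,'t,'x,'l) trace \<Rightarrow> ('i,'t,'x,'l) trace set" where
  "crp T = {T'. well_formed T' \<and> set T' \<subseteq> set T \<and>
      (\<forall>t. prefix (filter (\<lambda>e. thd e = t) T') (filter (\<lambda>e. thd e = t) T)) \<and>
      (\<forall>e \<in> set T'. \<forall>x. eop e = Rd x \<longrightarrow> (\<forall>f. is_lw T e f \<longleftrightarrow> is_lw T' e f))}"

definition must_before :: "('i,'t,'x,'l) trace \<Rightarrow> ('i,'t,'x,'l) event \<Rightarrow> ('i,'t,'x,'l) event \<Rightarrow> bool" where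
  "must_before T e f \<longleftrightarrow> (\<forall>T' \<in> crp T. f \<in> set T' \<longrightarrow> e \<in> set T' \<and> before T' e f)"

definition cs_match :: "('i,'t,'x,'l) trace \<Rightarrow> ('i,'t,'x,'l) event \<Rightarrow> 'l \<Rightarrow> ('i,'t,'x,'l) event \<Rightarrow> bool" where
  "cs_match T a l e \<longleftrightarrow> \<not> (\<exists>r' \<in> set T. \<exists>T' \<in> crp T. thd r' = thd a \<and> eop r' = Rel l \<and>
        before T' a r' \<and> before T' r' e)"

definition CS_T :: "('i,'t,'x,'l) trace \<Rightarrow> ('i,'t,'x,'l) event \<Rightarrow> ('i,'t,'x,'l) event \<Rightarrow> 'l \<Rightarrow> ('i,'t,'x,'l) event set" where
  "CS_T T a r l = {e. must_before T a e \<and> must_before T e r \<and> cs_match T a l e}"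

definition LH_T :: "('i,'t,'x,'l) trace \<Rightarrow> ('i,'t,'x,'l) event \<Rightarrow> ('l \<times> 't) set" where
  "LH_T T e = {(l,t). \<exists>a \<in> set T. \<exists>r \<in> set T. thd a = t \<and> eop a = Acq l \<and> thd r = t \<and> eop r = Rel l \<and>
      e \<in> CS_T T a r l}"

definition CS_po :: "('i,'t,'x,'l) trace \<Rightarrow> (('i,'t,'x,'l) event \<times> ('i,'t,'x,'l) event) set \<Rightarrow>
    ('i,'t,'x,'l) event \<Rightarrow> ('i,'t,'x,'l) event \<Rightarrow> 'l \<Rightarrow> ('i,'t,'x,'l) event set" where
  "CS_po T R a r l = {e. (a,e) \<in> R \<and> (e,r) \<in> R \<and> cs_match T a l e}"

definition LH_po :: "('i,'t,'x,'l) trace \<Rightarrow> (('i,'t,'x,'l) event \<times> ('i,'t,'x,'l) event) set \<Rightarrow>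
    ('i,'t,'x,'l) event \<Rightarrow> ('l \<times> 't) set" where
  "LH_po T R e = {(l,t). \<exists>a \<in> set T. \<exists>r \<in> set T. thd a = t \<and> eop a = Acq l \<and> thd r = t \<and> eop r = Rel l \<and>
      e \<in> CS_po T R a r l}"

definition strict_po_on :: "'a set \<Rightarrow> ('a \<times> 'a) set \<Rightarrow> bool" where
  "strict_po_on A R \<longleftrightarrow> R \<subseteq> A \<times> A \<and> irrefl R \<and> trans R"

definition MHB_criteria :: "('i,'t,'x,'l) trace \<Rightarrow> (('i,'t,'x,'l) event \<times> ('i,'t,'x,'l) event) set \<Rightarrow> bool" where
  "MHB_criteria T R \<longleftrightarrow> (\<forall>e f. (e,f) \<in> R \<longrightarrow>
      (\<forall>T' \<in> crp T. f \<in> set T' \<longrightarrow> e \<in> set T' \<and> before T' e f))"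

end

theory Submission
  imports Defs
begin

(* The MHB-Criteria say precisely that every pair ordered by < is ordered by \<prec>_T.
   Both lock-set notions share the condition (CS-Match) and differ only in the order used
   for (CS-Enclosed), so replacing < by the larger relation \<prec>_T can only enlarge critical
   sections and hence lock sets. *)

lemma MHB_criteria_iff_must_before:
  "MHB_criteria T R \<longleftrightarrow> (\<forall>(e, f) \<in> R. must_before T e f)"
  unfolding MHB_criteria_def must_before_def by blast

lemma CS_po_subset_CS_T:
  assumes "\<forall>(e, f) \<in> R. must_before T e f"
  shows "CS_po T R a r l \<subseteq> CS_T T a r l"
  using assms unfolding CS_po_def CS_T_def by blast

lemma LH_po_subset_LH_T:
  assumes "\<forall>(e, f) \<in> R. must_before T e f"
  shows "LH_po T R e \<subseteq> LH_T T e"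
  using CS_po_subset_CS_T [OF assms] unfolding LH_po_def LH_T_def by blast

theorem lemma6p5:
  fixes T :: "('i,'t,'x,'l) trace"
    and R :: "(('i,'t,'x,'l) event \<times> ('i,'t,'x,'l) event) set"
  assumes "well_formed T"
    and "acq_matched T"
    and "strict_po_on (evts T) R"
    and "MHB_criteria T R"
  shows "\<forall>e \<in> evts T. LH_po T R e \<subseteq> LH_T T e"
  using LH_po_subset_LH_T assms(4) unfolding MHB_criteria_iff_must_before by blast

end
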